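(* Let $j \neq 1$ and let $X \sim \mathcal{N}(\mu_j^*, (\sigma_j^* )^2 I_d)$ (i.e. $X$ comes from the $j$-th component); set $v = X - \mu_j^*$ and $\beta = (R_{j1}^* )^2/(64(\sigma_1^* \vee \sigma_j^* )^2)$. Consider the events $$\mathcal{E}_{j,1} := \{-(R_{j1}^* )^2/5 \le \langle v, \mu_j^* - \mu_1^*\rangle \},$$ $$\mathcal{E}_{j,2} := \{-(R_{j1}^* )^2 / 64 \le \langle v,\Delta_{\mu_1}\rangle \} \cap \{ \langle v,\Delta_{\mu_j}\rangle \le (\sigma_j^* / \sigma_1^* )^2 (R_{j1}^* )^2 / 64 \},$$ $$\mathcal{E}_{j,3} := \left\{d \left(1 - 2\sqrt{\beta/d} \right) \le \|v\|^2/(\sigma_j^* )^2 \le d \left(1 + 2\sqrt{\beta/d} + 2 \beta/d \right) \right\}.$$ If all three events occur, then $w_1(X) \le (\pi_1/\pi_j) \exp (-\beta)$ and $w_1^*(X) \le (\pi_1^* / \pi_j^* ) \exp (-\beta)$. Moreover, $P(\mathcal{E}_{j,1}\cap\mathcal{E}_{j,2}\cap\mathcal{E}_{j,3}) \ge 1 - 5 \exp (-\beta)$.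
   Context: $\mathcal{G}^*$ is a mixture with density $\sum_{l=1}^k \pi_l^* \mathcal{N}(\mu_l^*, (\sigma_l^* )^2 I_d)$ satisfying, for a universal constant $C\ge 64$, $\|\mu_i^* - \mu_l^*\| \ge C (\sigma_i^* \vee \sigma_l^* ) \sqrt{\log k + \log(\rho_\sigma \rho_\pi)}$ for all $i\ne l$, where $\rho_\pi = \max_i \pi_i^*/\min_i \pi_i^*$, $\rho_\sigma = \max_i \sigma_i^*/\min_i \sigma_i^*$. Current estimates $\{(\pi_i,\mu_i,\sigma_i)\}$ satisfy for all $i$: $\|\mu_i - \mu_i^*\| \le \frac{\sigma_i^*}{16}\min_{l\ne i}\frac{\|\mu_i^*-\mu_l^*\|}{\sigma_i^*\vee\sigma_l^*}$, $|\pi_i-\pi_i^*|\le \pi_i^*/2$, $|\sigma_i^2-(\sigma_i^* )^2|\le 0.5(\sigma_i^* )^2/\sqrt d$. $R_{j1}^* = \|\mu_j^*-\mu_1^*\|$, $\Delta_{\mu_i} = \mu_i^* - \mu_i$. The E-step weight is $w_i(X) = \frac{\pi_i \exp(-\|X - \mu_i\|^2/(2 \sigma_i^2) - d \log (\sigma_i^2) / 2)}{\sum_{l=1}^k \pi_l \exp(-\|X - \mu_l\|^2/(2 \sigma_l^2) - d \log (\sigma_l^2) / 2)}$, and $w_i^*$ is the same expression with the true parameters $(\pi_l^*,\mu_l^*,\sigma_l^* )$ in place of the estimates. *)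

theory Defs
  imports "HOL-Probability.Probability"
begin

definition gauss_iso :: "'a::euclidean_space \<Rightarrow> real \<Rightarrow> 'a measure" where
  "gauss_iso mu s = density lborel (\<lambda>x. ennreal
      ((2 * pi * s\<^sup>2) powr (- real DIM('a) / 2) * exp (- (norm (x - mu))\<^sup>2 / (2 * s\<^sup>2))))"

definition estep_weight ::
  "nat \<Rightarrow> (nat \<Rightarrow> real) \<Rightarrow> (nat \<Rightarrow> 'a::euclidean_space) \<Rightarrow> (nat \<Rightarrow> real) \<Rightarrow> nat \<Rightarrow> 'a \<Rightarrow> real" where
  "estep_weight k p m s i x =
     (p i * exp (- (norm (x - m i))\<^sup>2 / (2 * (s i)\<^sup>2) - real DIM('a) * ln ((s i)\<^sup>2) / 2)) /
     (\<Sum>l\<in>{1..k}. p l * exp (- (norm (x - m l))\<^sup>2 / (2 * (s l)\<^sup>2) - real DIM('a) * ln ((s l)\<^sup>2) / 2))"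

end

theory Submission
  imports Defs
begin

(* Write v = X - mu_j, d = DIM('a), M = max sigma_1 sigma_j and R = norm (mu_j - mu_1), so that
   beta = R^2 / (64 M^2); the separation assumption gives beta >= 16. The weight w_1(X) is at most
   (pi_1 / pi_j) exp (-L), where L is the difference of the log-densities of components 1 and j at X.
   On the event, with m_1 and m_j the current estimates of the means, norm (X - m_1)^2 exceeds
   norm v^2 by at least 2 R^2 / 5, while norm (X - m_j)^2 exceeds it by O(R^2 sigma_j^2 / sigma_1^2);
   so the part of L driven by the means is at least 6 rho beta, with rho = M^2 / sigma_1^2. The rest
   of L depends only on norm v^2, which lies in the chi-square window d +- 2 sqrt (beta d) (+ 2 beta),
   and on the variance estimates, which are within a factor 1 +- 1 / (2 sqrt d) of the truth; it is
   at least -5 rho beta. Hence L >= rho beta >= beta. The probability bound is a union bound over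
   five Chernoff estimates for N(mu_j, sigma_j^2 I): three for linear functionals of v and the two
   Laurent-Massart tails of norm v^2, each at most exp (-beta). *)

lemma ln_le_half_diff_inverse:
  fixes z :: real
  assumes "1 \<le> z"
  shows "ln z \<le> z / 2 - 1 / (2 * z)"
proof -
  let ?f = "\<lambda>x::real. x / 2 - 1 / (2 * x) - ln x"
  have "?f 1 \<le> ?f z"
  proof (rule DERIV_nonneg_imp_nondecreasing [OF assms])
    fix x :: real
    assume x: "1 \<le> x" "x \<le> z"
    have "DERIV ?f x :> (1 / 2 + 1 / (2 * x\<^sup>2) - 1 / x)"
      using x by (auto intro!: derivative_eq_intros simp: power2_eq_square field_simps)
    moreover have "1 / 2 + 1 / (2 * x\<^sup>2) - 1 / x = (1 - 1 / x)\<^sup>2 / 2"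
      using x by (simp add: power2_eq_square field_simps)
    ultimately show "\<exists>y. DERIV ?f x :> y \<and> 0 \<le> y"
      by auto
  qed
  then show ?thesis
    by simp
qed

lemma ln_add_one_ge_quadratic:
  fixes u :: real
  assumes "0 \<le> u"
  shows "u - u\<^sup>2 / 2 \<le> ln (1 + u)"
proof -
  let ?f = "\<lambda>x::real. ln (1 + x) - x + x\<^sup>2 / 2"
  have "?f 0 \<le> ?f u"
  proof (rule DERIV_nonneg_imp_nondecreasing [OF assms])
    fix x :: real
    assume x: "0 \<le> x" "x \<le> u"
    have "DERIV ?f x :> (1 / (1 + x) - 1 + x)"
      using x by (auto intro!: derivative_eq_intros simp: field_simps)
    moreover have "1 / (1 + x) - 1 + x = x\<^sup>2 / (1 + x)"
      using x by (simp add: power2_eq_square field_simps)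
    ultimately show "\<exists>y. DERIV ?f x :> y \<and> 0 \<le> y"
      using x by auto
  qed
  then show ?thesis
    by simp
qed

lemma ln_one_minus_le_quadratic:
  fixes u :: real
  assumes "0 \<le> u" "u < 1"
  shows "ln (1 - u) \<le> - u - u\<^sup>2 / 2"
proof -
  let ?f = "\<lambda>x::real. - x - x\<^sup>2 / 2 - ln (1 - x)"
  have "?f 0 \<le> ?f u"
  proof (rule DERIV_nonneg_imp_nondecreasing [OF assms(1)])
    fix x :: real
    assume x: "0 \<le> x" "x \<le> u"
    have "DERIV ?f x :> (- 1 - x + 1 / (1 - x))"
      using x assms by (auto intro!: derivative_eq_intros simp: field_simps)
    moreover have "- 1 - x + 1 / (1 - x) = x\<^sup>2 / (1 - x)"
      using x assms by (simp add: power2_eq_square field_simps)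
    ultimately show "\<exists>y. DERIV ?f x :> y \<and> 0 \<le> y"
      using x assms by auto
  qed
  then show ?thesis
    by simp
qed

section \<open>Isotropic Gaussian measures\<close>

definition gauss_iso_density :: "'a::euclidean_space \<Rightarrow> real \<Rightarrow> 'a \<Rightarrow> real" where
  "gauss_iso_density mu s x =
     (2 * pi * s\<^sup>2) powr (- real DIM('a) / 2) * exp (- (norm (x - mu))\<^sup>2 / (2 * s\<^sup>2))"

lemma gauss_iso_density_nonneg [simp]: "0 \<le> gauss_iso_density mu s x"
  by (simp add: gauss_iso_density_def)

lemma borel_measurable_gauss_iso_density [measurable]:
  "gauss_iso_density mu s \<in> borel_measurable borel"
  unfolding gauss_iso_density_def by measurable

lemma gauss_iso_eq_density: "gauss_iso mu s = density lborel (\<lambda>x. ennreal (gauss_iso_density mu s x))"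
  by (simp add: gauss_iso_def gauss_iso_density_def)

lemma space_gauss_iso [simp]: "space (gauss_iso mu s) = UNIV"
  by (simp add: gauss_iso_def)

lemma sets_gauss_iso [simp, measurable_cong]: "sets (gauss_iso mu s) = sets borel"
  by (simp add: gauss_iso_def)

lemma nn_integral_exp_neg_square:
  fixes s :: real
  assumes "s > 0"
  shows "(\<integral>\<^sup>+y. ennreal (exp (- y\<^sup>2 / (2 * s\<^sup>2))) \<partial>lborel) = ennreal (sqrt (2 * pi * s\<^sup>2))"
proof -
  have c: "sqrt (2 * pi * s\<^sup>2) > 0"
    using assms by simp
  have "(\<integral>\<^sup>+y. ennreal (exp (- y\<^sup>2 / (2 * s\<^sup>2))) \<partial>lborel)
      = (\<integral>\<^sup>+y. ennreal (sqrt (2 * pi * s\<^sup>2)) * ennreal (normal_density 0 s y) \<partial>lborel)"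
    using assms c by (simp add: normal_density_def ennreal_mult [symmetric])
  also have "\<dots> = ennreal (sqrt (2 * pi * s\<^sup>2)) * (\<integral>\<^sup>+y. ennreal (normal_density 0 s y) \<partial>lborel)"
    by (rule nn_integral_cmult) simp
  also have "(\<integral>\<^sup>+y. ennreal (normal_density 0 s y) \<partial>lborel) = 1"
    using assms by (subst nn_integral_eq_integral) auto
  finally show ?thesis
    by simp
qed

lemma nn_integral_exp_neg_norm_square:
  fixes s :: real
  assumes "s > 0"
  shows "(\<integral>\<^sup>+x. ennreal (exp (- (norm x)\<^sup>2 / (2 * s\<^sup>2))) \<partial>(lborel :: 'a::euclidean_space measure))
    = ennreal ((2 * pi * s\<^sup>2) powr (real DIM('a) / 2))"
proof -
  have "(norm x)\<^sup>2 = (\<Sum>b\<in>Basis. (x \<bullet> b)\<^sup>2)" for x :: 'a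
    unfolding power2_norm_eq_inner by (subst euclidean_inner) (simp add: power2_eq_square)
  then have "- (norm x)\<^sup>2 / (2 * s\<^sup>2) = (\<Sum>b\<in>Basis. - (x \<bullet> b)\<^sup>2 / (2 * s\<^sup>2))" for x :: 'a
    by (simp add: sum_divide_distrib sum_negf)
  then have "exp (- (norm x)\<^sup>2 / (2 * s\<^sup>2)) = (\<Prod>b\<in>Basis. exp (- (x \<bullet> b)\<^sup>2 / (2 * s\<^sup>2)))" for x :: 'a
    by (simp add: exp_sum)
  then have "(\<integral>\<^sup>+x. ennreal (exp (- (norm x)\<^sup>2 / (2 * s\<^sup>2))) \<partial>(lborel :: 'a measure))
      = (\<integral>\<^sup>+x. (\<Prod>b\<in>Basis. ennreal (exp (- (x \<bullet> b)\<^sup>2 / (2 * s\<^sup>2)))) \<partial>(lborel :: 'a measure))"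
    by (simp add: prod_ennreal)
  also have "\<dots> = (\<Prod>b\<in>(Basis :: 'a set). \<integral>\<^sup>+y. ennreal (exp (- y\<^sup>2 / (2 * s\<^sup>2))) \<partial>lborel)"
    by (rule nn_integral_lborel_prod) auto
  also have "\<dots> = ennreal (sqrt (2 * pi * s\<^sup>2) ^ DIM('a))"
    by (simp only: nn_integral_exp_neg_square [OF assms] prod_constant) (rule ennreal_power, simp)
  also have "sqrt (2 * pi * s\<^sup>2) ^ DIM('a) = (2 * pi * s\<^sup>2) powr (real DIM('a) / 2)"
  proof -
    have "2 * pi * s\<^sup>2 > 0"
      using assms by simp
    then have "sqrt (2 * pi * s\<^sup>2) ^ DIM('a) = ((2 * pi * s\<^sup>2) powr (1 / 2)) powr real DIM('a)"
      by (simp add: powr_realpow powr_half_sqrt)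
    then show ?thesis
      by (simp add: powr_powr)
  qed
  finally show ?thesis .
qed

lemma nn_integral_gauss_iso_density:
  fixes mu :: "'a::euclidean_space"
  assumes "s > 0"
  shows "(\<integral>\<^sup>+x. ennreal (gauss_iso_density mu s x) \<partial>lborel) = 1"
proof -
  define c where "c = (2 * pi * s\<^sup>2) powr (- real DIM('a) / 2)"
  have c: "c \<ge> 0" "c * (2 * pi * s\<^sup>2) powr (real DIM('a) / 2) = 1"
    using assms by (simp_all add: c_def powr_add [symmetric])
  have "(\<integral>\<^sup>+x. ennreal (gauss_iso_density mu s x) \<partial>lborel)
      = ennreal c * (\<integral>\<^sup>+x. ennreal (exp (- (norm (x - mu))\<^sup>2 / (2 * s\<^sup>2))) \<partial>lborel)"
    using c by (simp add: gauss_iso_density_def c_def ennreal_mult nn_integral_cmult)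
  also have "(\<integral>\<^sup>+x. ennreal (exp (- (norm (x - mu))\<^sup>2 / (2 * s\<^sup>2))) \<partial>lborel)
      = (\<integral>\<^sup>+x. ennreal (exp (- (norm x)\<^sup>2 / (2 * s\<^sup>2))) \<partial>(lborel :: 'a measure))"
    by (subst lborel_distr_plus [of mu, symmetric]) (simp add: nn_integral_distr)
  also have "\<dots> = ennreal ((2 * pi * s\<^sup>2) powr (real DIM('a) / 2))"
    by (rule nn_integral_exp_neg_norm_square [OF assms])
  finally show ?thesis
    using c by (simp add: ennreal_mult [symmetric])
qed

lemma prob_space_gauss_iso:
  assumes "s > 0"
  shows "prob_space (gauss_iso mu s)"
  by (rule prob_spaceI)
    (simp add: gauss_iso_eq_density emeasure_density nn_integral_gauss_iso_density [OF assms])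

(* Completing the square reduces exponential moments of gauss_iso to the mass of another Gaussian. *)
lemma nn_integral_gauss_iso_eq:
  fixes mu mu' :: "'a::euclidean_space"
  assumes "s' > 0" "c \<ge> 0" and [measurable]: "g \<in> borel_measurable borel"
    and "\<And>x. gauss_iso_density mu s x * g x = c * gauss_iso_density mu' s' x"
  shows "(\<integral>\<^sup>+x. ennreal (g x) \<partial>gauss_iso mu s) = ennreal c"
proof -
  have "(\<integral>\<^sup>+x. ennreal (g x) \<partial>gauss_iso mu s)
      = (\<integral>\<^sup>+x. ennreal (gauss_iso_density mu s x * g x) \<partial>lborel)"
    by (simp add: gauss_iso_eq_density nn_integral_density ennreal_mult')
  also have "\<dots> = (\<integral>\<^sup>+x. ennreal c * ennreal (gauss_iso_density mu' s' x) \<partial>lborel)"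
    using assms(2,4) by (simp add: ennreal_mult)
  also have "\<dots> = ennreal c"
    by (simp add: nn_integral_cmult nn_integral_gauss_iso_density [OF assms(1)])
  finally show ?thesis .
qed

lemma nn_integral_gauss_iso_exp_inner:
  fixes mu u :: "'a::euclidean_space"
  assumes "s > 0"
  shows "(\<integral>\<^sup>+x. ennreal (exp (l * inner (x - mu) u)) \<partial>gauss_iso mu s)
    = ennreal (exp (l\<^sup>2 * s\<^sup>2 * (norm u)\<^sup>2 / 2))"
proof (rule nn_integral_gauss_iso_eq [OF assms])
  fix x
  define mu' where "mu' = mu + (l * s\<^sup>2) *\<^sub>R u"
  have "(norm (x - mu'))\<^sup>2
      = (norm (x - mu))\<^sup>2 - 2 * (l * s\<^sup>2) * inner (x - mu) u + (l * s\<^sup>2)\<^sup>2 * (norm u)\<^sup>2"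
    unfolding mu'_def power2_norm_eq_inner
    by (simp add: inner_diff_left inner_diff_right inner_commute algebra_simps power2_eq_square)
  then have "- (norm (x - mu))\<^sup>2 / (2 * s\<^sup>2) + l * inner (x - mu) u
      = l\<^sup>2 * s\<^sup>2 * (norm u)\<^sup>2 / 2 + - (norm (x - mu'))\<^sup>2 / (2 * s\<^sup>2)"
    using assms by (simp add: field_simps power2_eq_square)
  then show "gauss_iso_density mu s x * exp (l * inner (x - mu) u)
      = exp (l\<^sup>2 * s\<^sup>2 * (norm u)\<^sup>2 / 2) * gauss_iso_density mu' s x"
    by (simp add: gauss_iso_density_def exp_add [symmetric] algebra_simps)
qed auto

lemma nn_integral_gauss_iso_exp_norm_square:
  fixes mu :: "'a::euclidean_space"
  assumes "s > 0" and "2 * l * s\<^sup>2 < 1"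
  shows "(\<integral>\<^sup>+x. ennreal (exp (l * (norm (x - mu))\<^sup>2)) \<partial>gauss_iso mu s)
    = ennreal ((1 - 2 * l * s\<^sup>2) powr (- real DIM('a) / 2))"
proof -
  define r where "r = 1 - 2 * l * s\<^sup>2"
  define s' where "s' = s / sqrt r"
  have r: "r > 0"
    using assms by (simp add: r_def)
  have s': "s' > 0" "s'\<^sup>2 = s\<^sup>2 / r"
    using assms r by (simp_all add: s'_def power_divide)
  have pointwise: "gauss_iso_density mu s x * exp (l * (norm (x - mu))\<^sup>2)
      = r powr (- real DIM('a) / 2) * gauss_iso_density mu s' x" for x
  proof -
    let ?D = "- real DIM('a) / 2"
    have "2 * pi * s\<^sup>2 = r * (2 * pi * s'\<^sup>2)"
      using r by (simp add: s')
    then have K: "(2 * pi * s\<^sup>2) powr ?D = r powr ?D * (2 * pi * s'\<^sup>2) powr ?D"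
      by (simp only: powr_mult)
    have "- (norm (x - mu))\<^sup>2 / (2 * s\<^sup>2) + l * (norm (x - mu))\<^sup>2
        = - (norm (x - mu))\<^sup>2 / (2 * s'\<^sup>2)"
      using assms r unfolding s' r_def by (simp add: field_simps)
    then have E: "exp (- (norm (x - mu))\<^sup>2 / (2 * s\<^sup>2)) * exp (l * (norm (x - mu))\<^sup>2)
        = exp (- (norm (x - mu))\<^sup>2 / (2 * s'\<^sup>2))"
      by (simp add: exp_add [symmetric])
    show ?thesis
      using E unfolding gauss_iso_density_def K by (simp add: mult.assoc)
  qed
  have "(\<integral>\<^sup>+x. ennreal (exp (l * (norm (x - mu))\<^sup>2)) \<partial>gauss_iso mu s)
      = ennreal (r powr (- real DIM('a) / 2))"
    by (rule nn_integral_gauss_iso_eq [OF s'(1) _ _ pointwise]) auto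
  then show ?thesis
    by (simp add: r_def)
qed

section \<open>Gaussian tail bounds\<close>

lemma measure_gauss_iso_inner_ge:
  fixes mu u :: "'a::euclidean_space"
  assumes s: "s > 0" and U: "U > 0" "norm u \<le> U" and t: "t > 0" "2 * b * s\<^sup>2 * U\<^sup>2 \<le> t\<^sup>2"
  shows "measure (gauss_iso mu s) {x. t \<le> inner (x - mu) u} \<le> exp (- b)"
proof -
  define l where "l = t / (s\<^sup>2 * U\<^sup>2)"
  have l: "l > 0"
    using s U t by (simp add: l_def)
  have "emeasure (gauss_iso mu s) {x. t \<le> inner (x - mu) u}
      \<le> ennreal (exp (- l * t)) * (\<integral>\<^sup>+x. ennreal (exp (l * inner (x - mu) u)) \<partial>gauss_iso mu s)"
    using Chernoff_ineq_nn_integral_ge [OF l, of UNIV "gauss_iso mu s" "\<lambda>x. inner (x - mu) u" t]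
    by simp
  also have "\<dots> = ennreal (exp (- l * t + l\<^sup>2 * s\<^sup>2 * (norm u)\<^sup>2 / 2))"
    by (simp add: nn_integral_gauss_iso_exp_inner [OF s] ennreal_mult [symmetric] exp_add [symmetric])
  also have "\<dots> \<le> ennreal (exp (- b))"
  proof (intro ennreal_leI exp_mono)
    have "l\<^sup>2 * s\<^sup>2 * (norm u)\<^sup>2 \<le> l\<^sup>2 * s\<^sup>2 * U\<^sup>2"
      using U by (intro mult_left_mono power_mono) auto
    moreover have "- l * t + l\<^sup>2 * s\<^sup>2 * U\<^sup>2 / 2 = - t\<^sup>2 / (2 * s\<^sup>2 * U\<^sup>2)"
      using s U by (simp add: l_def field_simps power2_eq_square)
    moreover have "b \<le> t\<^sup>2 / (2 * s\<^sup>2 * U\<^sup>2)"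
      using s U t by (simp add: field_simps)
    ultimately show "- l * t + l\<^sup>2 * s\<^sup>2 * (norm u)\<^sup>2 / 2 \<le> - b"
      by linarith
  qed
  finally show ?thesis
    unfolding measure_def by (simp add: enn2real_leI)
qed

lemma measure_gauss_iso_norm_square_gt:
  fixes mu :: "'a::euclidean_space"
  assumes s: "s > 0" and q: "q > 0"
  shows "measure (gauss_iso mu s)
      {x. real DIM('a) * (1 + 2 * q + 2 * q\<^sup>2) < (norm (x - mu))\<^sup>2 / s\<^sup>2}
    \<le> exp (- real DIM('a) * q\<^sup>2)"
proof -
  define d where "d = real DIM('a)"
  define l where "l = q / ((1 + 2 * q) * s\<^sup>2)"
  define t where "t = s\<^sup>2 * d * (1 + 2 * q + 2 * q\<^sup>2)"
  have l: "l > 0"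
    using s q by (simp add: l_def)
  have "l * s\<^sup>2 = q / (1 + 2 * q)"
    using s by (simp add: l_def)
  then have ls: "1 - 2 * l * s\<^sup>2 = 1 / (1 + 2 * q)"
    using q by (simp add: field_simps)
  have "{x. d * (1 + 2 * q + 2 * q\<^sup>2) < (norm (x - mu))\<^sup>2 / s\<^sup>2} \<subseteq> {x. t \<le> (norm (x - mu))\<^sup>2}"
    using s by (auto simp: t_def field_simps)
  then have "emeasure (gauss_iso mu s) {x. d * (1 + 2 * q + 2 * q\<^sup>2) < (norm (x - mu))\<^sup>2 / s\<^sup>2}
      \<le> emeasure (gauss_iso mu s) {x. t \<le> (norm (x - mu))\<^sup>2}"
    by (rule emeasure_mono) simp
  also have "\<dots> \<le> ennreal (exp (- l * t))
      * (\<integral>\<^sup>+x. ennreal (exp (l * (norm (x - mu))\<^sup>2)) \<partial>gauss_iso mu s)"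
    using Chernoff_ineq_nn_integral_ge [OF l, of UNIV "gauss_iso mu s" "\<lambda>x. (norm (x - mu))\<^sup>2" t]
    by simp
  also have "\<dots> = ennreal (exp (- l * t + d / 2 * ln (1 + 2 * q)))"
  proof -
    have "1 / (1 + 2 * q) > 0"
      using q by simp
    then have "2 * l * s\<^sup>2 < 1"
      using ls by linarith
    moreover have "(1 - 2 * l * s\<^sup>2) powr (- d / 2) = exp (d / 2 * ln (1 + 2 * q))"
      using q unfolding ls by (simp add: powr_def ln_div)
    ultimately show ?thesis
      by (simp add: nn_integral_gauss_iso_exp_norm_square [OF s] d_def ennreal_mult [symmetric]
          exp_add [symmetric])
  qed
  also have "\<dots> \<le> ennreal (exp (- d * q\<^sup>2))"
  proof (intro ennreal_leI exp_mono)
    have "d / 2 * ln (1 + 2 * q) \<le> d / 2 * ((1 + 2 * q) / 2 - 1 / (2 * (1 + 2 * q)))"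
      using q ln_le_half_diff_inverse [of "1 + 2 * q"] by (intro mult_left_mono) (auto simp: d_def)
    moreover have "- l * t + d / 2 * ((1 + 2 * q) / 2 - 1 / (2 * (1 + 2 * q))) = - d * q\<^sup>2"
    proof -
      have "l * t = q * d * (1 + 2 * q + 2 * q\<^sup>2) / (1 + 2 * q)"
        using s by (simp add: l_def t_def)
      moreover have "1 + 2 * q > 0"
        using q by simp
      ultimately show ?thesis
        by (simp add: field_simps power2_eq_square)
    qed
    ultimately show "- l * t + d / 2 * ln (1 + 2 * q) \<le> - d * q\<^sup>2"
      by linarith
  qed
  finally show ?thesis
    unfolding measure_def d_def by (simp add: enn2real_leI)
qed

lemma measure_gauss_iso_norm_square_lt:
  fixes mu :: "'a::euclidean_space"
  assumes s: "s > 0" and q: "q > 0"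
  shows "measure (gauss_iso mu s) {x. (norm (x - mu))\<^sup>2 / s\<^sup>2 < real DIM('a) * (1 - 2 * q)}
    \<le> exp (- real DIM('a) * q\<^sup>2)"
proof -
  define d where "d = real DIM('a)"
  define l where "l = q / s\<^sup>2"
  define t where "t = s\<^sup>2 * d * (1 - 2 * q)"
  have l: "l > 0" and ls: "1 - 2 * (- l) * s\<^sup>2 = 1 + 2 * q"
    using s q by (simp_all add: l_def)
  have "{x. (norm (x - mu))\<^sup>2 / s\<^sup>2 < d * (1 - 2 * q)} \<subseteq> {x. (norm (x - mu))\<^sup>2 \<le> t}"
    using s by (auto simp: t_def field_simps)
  then have "emeasure (gauss_iso mu s) {x. (norm (x - mu))\<^sup>2 / s\<^sup>2 < d * (1 - 2 * q)}
      \<le> emeasure (gauss_iso mu s) {x. (norm (x - mu))\<^sup>2 \<le> t}"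
    by (rule emeasure_mono) simp
  also have "\<dots> \<le> ennreal (exp (l * t))
      * (\<integral>\<^sup>+x. ennreal (exp ((- l) * (norm (x - mu))\<^sup>2)) \<partial>gauss_iso mu s)"
    using Chernoff_ineq_nn_integral_le [OF l, of UNIV "gauss_iso mu s" "\<lambda>x. (norm (x - mu))\<^sup>2" t]
    by simp
  also have "\<dots> = ennreal (exp (l * t)) * ennreal ((1 - 2 * (- l) * s\<^sup>2) powr (- d / 2))"
  proof -
    have "2 * (- l) * s\<^sup>2 < 1"
      using mult_pos_pos [OF l, of "s\<^sup>2"] s by simp
    then show ?thesis
      unfolding d_def by (simp only: nn_integral_gauss_iso_exp_norm_square [OF s])
  qed
  also have "\<dots> = ennreal (exp (l * t - d / 2 * ln (1 + 2 * q)))"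
  proof -
    have "(1 - 2 * (- l) * s\<^sup>2) powr (- d / 2) = exp (- (d / 2 * ln (1 + 2 * q)))"
      using q unfolding ls by (simp add: powr_def)
    then show ?thesis
      by (simp add: ennreal_mult [symmetric] exp_add [symmetric])
  qed
  also have "\<dots> \<le> ennreal (exp (- d * q\<^sup>2))"
  proof (intro ennreal_leI exp_mono)
    have "d / 2 * (2 * q - (2 * q)\<^sup>2 / 2) \<le> d / 2 * ln (1 + 2 * q)"
      using q ln_add_one_ge_quadratic [of "2 * q"] by (intro mult_left_mono) (auto simp: d_def)
    moreover have "l * t - d / 2 * (2 * q - (2 * q)\<^sup>2 / 2) = - d * q\<^sup>2"
      using s by (simp add: l_def t_def field_simps power2_eq_square)
    ultimately show "l * t - d / 2 * ln (1 + 2 * q) \<le> - d * q\<^sup>2"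
      by linarith
  qed
  finally show ?thesis
    unfolding measure_def d_def by (simp add: enn2real_leI)
qed

section \<open>The log density ratio\<close>

lemma estep_weight_le_exp:
  fixes m :: "nat \<Rightarrow> 'a::euclidean_space"
  assumes i: "i \<in> {1..k}" and j: "j \<in> {1..k}" and p: "\<forall>l\<in>{1..k}. p l > 0"
    and gap: "\<beta> \<le> ((norm (X - m i))\<^sup>2 / (2 * (s i)\<^sup>2) + real DIM('a) * ln ((s i)\<^sup>2) / 2)
      - ((norm (X - m j))\<^sup>2 / (2 * (s j)\<^sup>2) + real DIM('a) * ln ((s j)\<^sup>2) / 2)"
  shows "estep_weight k p m s i X \<le> p i / p j * exp (- \<beta>)"
proof -
  define g where "g l = - (norm (X - m l))\<^sup>2 / (2 * (s l)\<^sup>2) - real DIM('a) * ln ((s l)\<^sup>2) / 2" for l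
  define T where "T l = p l * exp (g l)" for l
  have T: "\<forall>l\<in>{1..k}. T l > 0"
    using p by (simp add: T_def)
  then have "T j \<le> (\<Sum>l\<in>{1..k}. T l)"
    using j by (intro member_le_sum) (auto intro: less_imp_le)
  moreover have "T j > 0" "T i \<ge> 0"
    using T i j by (auto intro: less_imp_le)
  ultimately have "T i / (\<Sum>l\<in>{1..k}. T l) \<le> T i / T j"
    by (intro divide_left_mono) auto
  also have "\<dots> = p i / p j * exp (g i - g j)"
    by (simp add: T_def exp_diff)
  also have "\<dots> \<le> p i / p j * exp (- \<beta>)"
    using gap p i j by (intro mult_left_mono) (auto simp: g_def intro: less_imp_le)
  finally show ?thesis
    by (simp add: estep_weight_def T_def g_def)
qed

(* With t = s_j / s_1 the ratio of the two variance estimates and A = norm v^2 / s_j, the quantity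
   A / 2 * (t - 1) - d / 2 * ln t is the part of the log density ratio that the means do not affect. *)
lemma variance_term_ge_of_ge_one:
  fixes t A sd h :: real
  assumes t: "1 \<le> t" and A: "sd\<^sup>2 - sd * h \<le> A"
  shows "- (t * h\<^sup>2 / 4) \<le> A / 2 * (t - 1) - sd\<^sup>2 / 2 * ln t"
proof -
  have "sd\<^sup>2 / 2 * ln t \<le> sd\<^sup>2 / 2 * (t / 2 - 1 / (2 * t))"
    using t by (intro mult_left_mono ln_le_half_diff_inverse) auto
  moreover have "(sd\<^sup>2 - sd * h) / 2 * (t - 1) \<le> A / 2 * (t - 1)"
    using t A by (intro mult_right_mono) auto
  moreover have "(sd\<^sup>2 - sd * h) / 2 * (t - 1) - sd\<^sup>2 / 2 * (t / 2 - 1 / (2 * t))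
      = (sd * (t - 1) - t * h)\<^sup>2 / (4 * t) - t * h\<^sup>2 / 4"
    using t by (simp add: field_simps power2_eq_square)
  moreover have "(sd * (t - 1) - t * h)\<^sup>2 / (4 * t) \<ge> 0"
    using t by simp
  ultimately show ?thesis
    by linarith
qed

lemma variance_term_ge_of_less_one:
  fixes t A sd h c :: real
  assumes t: "0 < t" "t < 1" and A: "A \<le> sd\<^sup>2 + sd * h + c" and c: "0 \<le> c"
  shows "- (h\<^sup>2 / 4 + c / 2) \<le> A / 2 * (t - 1) - sd\<^sup>2 / 2 * ln t"
proof -
  define u where "u = 1 - t"
  have u: "0 < u" "u < 1" and tu: "t = 1 - u"
    using t by (simp_all add: u_def)
  have "sd\<^sup>2 / 2 * ln t \<le> sd\<^sup>2 / 2 * (- u - u\<^sup>2 / 2)"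
    using u unfolding tu by (intro mult_left_mono ln_one_minus_le_quadratic) auto
  moreover have "A * u \<le> (sd\<^sup>2 + sd * h + c) * u"
    using A u by (intro mult_right_mono) auto
  moreover have "A / 2 * (t - 1) = - (A * u) / 2"
    by (simp add: tu)
  moreover have "- ((sd\<^sup>2 + sd * h + c) * u) / 2 - sd\<^sup>2 / 2 * (- u - u\<^sup>2 / 2)
      = (sd * u - h)\<^sup>2 / 4 - h\<^sup>2 / 4 - c * u / 2"
    by (simp add: field_simps power2_eq_square)
  moreover have "c * u \<le> c"
    using c u by (simp add: mult_left_le)
  moreover have "(sd * u - h)\<^sup>2 / 4 \<ge> 0"
    by simp
  ultimately show ?thesis
    by linarith
qed

lemma window_div_estimate_lower:
  fixes sd sb Sj sj a :: real
  assumes sd: "sd \<ge> 1" and sb: "sb \<ge> 0" and Sj: "Sj > 0" and sj: "\<bar>sj - Sj\<bar> \<le> Sj / (2 * sd)"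
    and a: "0 \<le> a" "Sj * (sd\<^sup>2 - 2 * sb * sd) \<le> a"
  shows "sd\<^sup>2 - sd * (1 / 2 + 2 * sb) \<le> a / sj"
proof -
  define e where "e = 1 / (2 * sd)"
  have e: "0 < e" "e \<le> 1 / 2" "e * sd\<^sup>2 = sd / 2"
    using sd by (simp_all add: e_def power2_eq_square)
  have sj_bounds: "(1 - e) * Sj \<le> sj" "sj \<le> (1 + e) * Sj"
    using sj by (auto simp: e_def abs_le_iff algebra_simps)
  have "e * Sj \<le> 1 / 2 * Sj" "Sj - e * Sj \<le> sj"
    using e Sj sj_bounds(1) by (simp_all add: algebra_simps mult_right_mono)
  then have sj_pos: "sj > 0"
    using Sj by linarith
  show ?thesis
  proof (cases "sd\<^sup>2 - 2 * sb * sd \<ge> 0")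
    case True
    have "(1 - e) * sj \<le> (1 - e) * ((1 + e) * Sj)"
      using sj_bounds(2) e by (intro mult_left_mono) auto
    also have "\<dots> \<le> Sj"
      using Sj by (simp add: algebra_simps)
    finally have "(sd\<^sup>2 - 2 * sb * sd) * ((1 - e) * sj) \<le> (sd\<^sup>2 - 2 * sb * sd) * Sj"
      using True by (intro mult_left_mono)
    moreover have "(1 - e) * (sd\<^sup>2 - 2 * sb * sd) * sj = (sd\<^sup>2 - 2 * sb * sd) * ((1 - e) * sj)"
      "(sd\<^sup>2 - 2 * sb * sd) * Sj = Sj * (sd\<^sup>2 - 2 * sb * sd)"
      by (simp_all add: algebra_simps)
    ultimately have "(1 - e) * (sd\<^sup>2 - 2 * sb * sd) * sj \<le> a"
      using a(2) by linarith
    then have "(1 - e) * (sd\<^sup>2 - 2 * sb * sd) \<le> a / sj"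
      by (subst pos_le_divide_eq [OF sj_pos])
    moreover have "(1 - e) * (sd\<^sup>2 - 2 * sb * sd) = sd\<^sup>2 - e * sd\<^sup>2 - 2 * sb * sd + e * (2 * sb * sd)"
      by (simp add: algebra_simps)
    moreover have "0 \<le> e * (2 * sb * sd)"
      using e sb sd by simp
    ultimately show ?thesis
      using e(3) by (simp add: algebra_simps)
  next
    case False
    moreover have "0 \<le> a / sj"
      using a sj_pos by simp
    ultimately show ?thesis
      using sd by (simp add: algebra_simps)
  qed
qed

lemma window_div_estimate_upper:
  fixes sd sb Sj sj a :: real
  assumes sd: "sd \<ge> 1" and sb: "sb \<ge> 0" and Sj: "Sj > 0" and sj: "\<bar>sj - Sj\<bar> \<le> Sj / (2 * sd)"
    and a: "a \<le> Sj * (sd\<^sup>2 + 2 * sb * sd + 2 * sb\<^sup>2)"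
  shows "a / sj \<le> sd\<^sup>2 + sd * (1 + 2 * sb) + (2 * sb + 4 * sb\<^sup>2)"
proof -
  define e where "e = 1 / (2 * sd)"
  have e: "0 < e" "e \<le> 1 / 2" "e * sd = 1 / 2"
    using sd by (simp_all add: e_def)
  have sj_lower: "(1 - e) * Sj \<le> sj"
    using sj by (auto simp: e_def abs_le_iff algebra_simps)
  have "e * Sj \<le> 1 / 2 * Sj" "Sj - e * Sj \<le> sj"
    using e Sj sj_lower by (simp_all add: algebra_simps mult_right_mono)
  then have sj_pos: "sj > 0"
    using Sj by linarith
  have "Sj \<le> (1 + 2 * e) * ((1 - e) * Sj)"
  proof -
    have "(1 + 2 * e) * ((1 - e) * Sj) = Sj + e * (1 - 2 * e) * Sj"
      by (simp add: algebra_simps)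
    moreover have "0 \<le> e * (1 - 2 * e) * Sj"
      using e Sj by simp
    ultimately show ?thesis
      by linarith
  qed
  also have "\<dots> \<le> (1 + 2 * e) * sj"
    using sj_lower e by (intro mult_left_mono) auto
  finally have "Sj * (sd\<^sup>2 + 2 * sb * sd + 2 * sb\<^sup>2) \<le> (1 + 2 * e) * sj * (sd\<^sup>2 + 2 * sb * sd + 2 * sb\<^sup>2)"
    using sb sd by (intro mult_right_mono) auto
  then have "a / sj \<le> (1 + 2 * e) * (sd\<^sup>2 + 2 * sb * sd + 2 * sb\<^sup>2)"
    using a sj_pos by (simp add: pos_divide_le_eq algebra_simps)
  also have "\<dots> = sd\<^sup>2 + sd * (1 + 2 * sb) + 2 * sb + 2 * sb\<^sup>2 + 2 * e * (2 * sb\<^sup>2)"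
  proof -
    have "2 * e * sd\<^sup>2 = sd" "2 * e * (2 * sb * sd) = 2 * sb"
      using e by (simp_all add: power2_eq_square algebra_simps)
    then show ?thesis
      by (simp add: algebra_simps)
  qed
  also have "\<dots> \<le> sd\<^sup>2 + sd * (1 + 2 * sb) + (2 * sb + 4 * sb\<^sup>2)"
    using e mult_right_mono [OF e(2), of "2 * sb\<^sup>2"] by simp
  finally show ?thesis .
qed

lemma variance_terms_ge:
  fixes sd sb S1 Sj s1 sj MM a :: real
  assumes sd: "sd \<ge> 1" and sb: "sb \<ge> 4"
    and S: "0 < S1" "0 < Sj" "S1 \<le> MM" "Sj \<le> MM"
    and s1: "\<bar>s1 - S1\<bar> \<le> S1 / (2 * sd)" and sj: "\<bar>sj - Sj\<bar> \<le> Sj / (2 * sd)"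
    and a: "0 \<le> a" "Sj * (sd\<^sup>2 - 2 * sb * sd) \<le> a" "a \<le> Sj * (sd\<^sup>2 + 2 * sb * sd + 2 * sb\<^sup>2)"
  shows "- (5 * (MM / S1) * sb\<^sup>2) \<le> a / (2 * s1) - a / (2 * sj) + sd\<^sup>2 * ln s1 / 2 - sd\<^sup>2 * ln sj / 2"
proof -
  have "S1 / (2 * sd) \<le> S1 / 2" "Sj / (2 * sd) \<le> Sj / 2"
    using sd S by (simp_all add: field_simps)
  then have s1_bounds: "S1 / 2 \<le> s1" and sj_bounds: "Sj / 2 \<le> sj" "sj \<le> 3 / 2 * Sj"
    using s1 sj unfolding abs_le_iff by auto
  have pos: "s1 > 0" "sj > 0"
    using s1_bounds sj_bounds S by auto
  define \<rho> where "\<rho> = MM / S1"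
  have \<rho>: "1 \<le> \<rho>"
    using S by (simp add: \<rho>_def)
  define t where "t = sj / s1"
  define A where "A = a / sj"
  have t: "t > 0"
    using pos by (simp add: t_def)
  have sb_sq: "4 * sb \<le> sb\<^sup>2"
    using sb by (simp add: power2_eq_square mult_right_mono)
  have "0 \<le> sb"
    using sb by simp
  note window = window_div_estimate_lower [OF sd this S(2) sj a(1,2), folded A_def]
    window_div_estimate_upper [OF sd this S(2) sj a(3), folded A_def]
  have "- (5 * \<rho> * sb\<^sup>2) \<le> A / 2 * (t - 1) - sd\<^sup>2 / 2 * ln t"
  proof (cases "1 \<le> t")
    case True
    have "t \<le> (3 / 2 * Sj) / (S1 / 2)"
      unfolding t_def using pos s1_bounds sj_bounds S by (intro frac_le) auto
    also have "\<dots> \<le> 3 * \<rho>"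
      using S by (simp add: \<rho>_def divide_right_mono)
    finally have "t * (1 / 2 + 2 * sb)\<^sup>2 \<le> 3 * \<rho> * (1 / 2 + 2 * sb)\<^sup>2"
      by (intro mult_right_mono) auto
    moreover have "3 * \<rho> * (1 / 2 + 2 * sb)\<^sup>2 \<le> 20 * \<rho> * sb\<^sup>2"
    proof -
      have "(1 / 2 + 2 * sb)\<^sup>2 = 1 / 4 + 2 * sb + 4 * sb\<^sup>2"
        by (simp add: power2_eq_square algebra_simps)
      then have "3 * (1 / 2 + 2 * sb)\<^sup>2 \<le> 20 * sb\<^sup>2"
        using sb sb_sq by linarith
      then show ?thesis
        using \<rho> mult_left_mono [of "3 * (1 / 2 + 2 * sb)\<^sup>2" "20 * sb\<^sup>2" \<rho>] by (simp add: ac_simps)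
    qed
    ultimately show ?thesis
      using variance_term_ge_of_ge_one [OF True window(1)] by linarith
  next
    case False
    have "(1 + 2 * sb)\<^sup>2 = 1 + 4 * sb + 4 * sb\<^sup>2"
      by (simp add: power2_eq_square algebra_simps)
    then have "(1 + 2 * sb)\<^sup>2 / 4 + (2 * sb + 4 * sb\<^sup>2) / 2 \<le> 5 * sb\<^sup>2"
      using sb sb_sq by (simp add: field_simps)
    moreover have "5 * sb\<^sup>2 \<le> 5 * \<rho> * sb\<^sup>2"
      using \<rho> by (simp add: mult_right_mono [of 1 \<rho>, simplified])
    moreover have "0 \<le> 2 * sb + 4 * sb\<^sup>2"
      using sb by simp
    then have "- ((1 + 2 * sb)\<^sup>2 / 4 + (2 * sb + 4 * sb\<^sup>2) / 2) \<le> A / 2 * (t - 1) - sd\<^sup>2 / 2 * ln t"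
      using t False by (intro variance_term_ge_of_less_one window(2)) auto
    ultimately show ?thesis
      by linarith
  qed
  moreover have "A / 2 * (t - 1) - sd\<^sup>2 / 2 * ln t
      = a / (2 * s1) - a / (2 * sj) + sd\<^sup>2 * ln s1 / 2 - sd\<^sup>2 * ln sj / 2"
    using pos by (simp add: t_def A_def ln_div field_simps)
  ultimately show ?thesis
    by (simp add: \<rho>_def)
qed

lemma mean_terms_ge:
  fixes S1 Sj s1 sj MM \<beta> a Y1 Yj R :: real
  assumes S: "0 < S1" "0 < Sj" "S1 \<le> MM" "Sj \<le> MM"
    and s1: "\<bar>s1 - S1\<bar> \<le> S1 / 2" and sj: "\<bar>sj - Sj\<bar> \<le> Sj / 2"
    and R: "R\<^sup>2 = 64 * \<beta> * MM" and \<beta>: "0 \<le> \<beta>"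
    and Y1: "a + 2 * R\<^sup>2 / 5 \<le> Y1" and Yj: "Yj \<le> a + Sj / S1 * R\<^sup>2 / 32 + Sj * R\<^sup>2 / (256 * MM)"
  shows "a / (2 * s1) - a / (2 * sj) + 6 * (MM / S1) * \<beta> \<le> Y1 / (2 * s1) - Yj / (2 * sj)"
proof -
  have s1_bounds: "s1 \<le> 3 / 2 * S1" "S1 / 2 \<le> s1" and sj_bounds: "Sj / 2 \<le> sj"
    using s1 sj unfolding abs_le_iff by auto
  have pos: "s1 > 0" "sj > 0" "MM > 0"
    using s1_bounds sj_bounds S by auto
  define \<rho> where "\<rho> = MM / S1"
  have \<rho>: "1 \<le> \<rho>"
    using S by (simp add: \<rho>_def)
  have "a / (2 * s1) + 2 * R\<^sup>2 / (15 * S1) \<le> Y1 / (2 * s1)"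
  proof -
    have "R\<^sup>2 / (5 * (3 / 2 * S1)) \<le> R\<^sup>2 / (5 * s1)"
      using s1_bounds pos by (intro divide_left_mono) auto
    moreover have "(a + 2 * R\<^sup>2 / 5) / (2 * s1) \<le> Y1 / (2 * s1)"
      using Y1 pos by (intro divide_right_mono) auto
    ultimately show ?thesis
      using pos by (simp add: add_divide_distrib)
  qed
  moreover have "Yj / (2 * sj) \<le> a / (2 * sj) + R\<^sup>2 / (32 * S1) + R\<^sup>2 / (256 * MM)"
  proof -
    have ratio: "Sj / sj \<le> 2"
      using sj_bounds pos by (simp add: field_simps)
    have "Yj / (2 * sj) \<le> a / (2 * sj) + Sj / sj * (R\<^sup>2 / (64 * S1)) + Sj / sj * (R\<^sup>2 / (512 * MM))"
      using divide_right_mono [OF Yj, of "2 * sj"] pos by (simp add: add_divide_distrib ac_simps)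
    also have "\<dots> \<le> a / (2 * sj) + 2 * (R\<^sup>2 / (64 * S1)) + 2 * (R\<^sup>2 / (512 * MM))"
      using ratio S pos by (intro add_mono mult_right_mono) auto
    finally show ?thesis
      by simp
  qed
  moreover have "R\<^sup>2 / S1 = 64 * (\<rho> * \<beta>)" "R\<^sup>2 / MM = 64 * \<beta>"
    using R pos S by (simp_all add: \<rho>_def field_simps)
  moreover have "2 * R\<^sup>2 / (15 * S1) = 2 / 15 * (R\<^sup>2 / S1)" "R\<^sup>2 / (32 * S1) = R\<^sup>2 / S1 / 32"
    "R\<^sup>2 / (256 * MM) = R\<^sup>2 / MM / 256" "6 * (MM / S1) * \<beta> = 6 * (\<rho> * \<beta>)"
    by (simp_all add: \<rho>_def)
  moreover have "\<beta> \<le> \<rho> * \<beta>"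
    using \<rho> \<beta> by (simp add: mult_right_mono [of 1 \<rho>, simplified])
  ultimately show ?thesis
    using \<beta> by linarith
qed

lemma log_ratio_terms_ge:
  fixes sd sb S1 Sj s1 sj MM a Y1 Yj R :: real
  assumes sd: "sd \<ge> 1" and sb: "sb \<ge> 4"
    and S: "0 < S1" "0 < Sj" "S1 \<le> MM" "Sj \<le> MM"
    and s1: "\<bar>s1 - S1\<bar> \<le> S1 / (2 * sd)" and sj: "\<bar>sj - Sj\<bar> \<le> Sj / (2 * sd)"
    and R: "R\<^sup>2 = 64 * sb\<^sup>2 * MM"
    and a: "0 \<le> a" "Sj * (sd\<^sup>2 - 2 * sb * sd) \<le> a" "a \<le> Sj * (sd\<^sup>2 + 2 * sb * sd + 2 * sb\<^sup>2)"
    and Y1: "a + 2 * R\<^sup>2 / 5 \<le> Y1" and Yj: "Yj \<le> a + Sj / S1 * R\<^sup>2 / 32 + Sj * R\<^sup>2 / (256 * MM)"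
  shows "sb\<^sup>2 \<le> (Y1 / (2 * s1) + sd\<^sup>2 * ln s1 / 2) - (Yj / (2 * sj) + sd\<^sup>2 * ln sj / 2)"
proof -
  have "S1 / (2 * sd) \<le> S1 / 2" "Sj / (2 * sd) \<le> Sj / 2"
    using sd S by (simp_all add: field_simps)
  then have "\<bar>s1 - S1\<bar> \<le> S1 / 2" "\<bar>sj - Sj\<bar> \<le> Sj / 2"
    using s1 sj by linarith+
  define \<rho> where "\<rho> = MM / S1"
  have "a / (2 * s1) - a / (2 * sj) + 6 * \<rho> * sb\<^sup>2 \<le> Y1 / (2 * s1) - Yj / (2 * sj)"
    unfolding \<rho>_def by (rule mean_terms_ge [OF S \<open>\<bar>s1 - S1\<bar> \<le> S1 / 2\<close> \<open>\<bar>sj - Sj\<bar> \<le> Sj / 2\<close> R _ Y1 Yj]) simp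
  moreover have "- (5 * \<rho> * sb\<^sup>2) \<le> a / (2 * s1) - a / (2 * sj) + sd\<^sup>2 * ln s1 / 2 - sd\<^sup>2 * ln sj / 2"
    unfolding \<rho>_def by (rule variance_terms_ge [OF sd sb S s1 sj a])
  moreover have "sb\<^sup>2 \<le> \<rho> * sb\<^sup>2"
    using S by (simp add: \<rho>_def mult_right_mono [of 1 "MM / S1", simplified])
  ultimately show ?thesis
    by linarith
qed

lemma sq_norm_add_add_ge:
  fixes v U D :: "'a::real_inner"
  assumes U: "norm U = R" and D: "norm D \<le> R / 16"
    and vU: "- R\<^sup>2 / 5 \<le> inner v U" and vD: "- R\<^sup>2 / 64 \<le> inner v D"
  shows "(norm v)\<^sup>2 + 2 * R\<^sup>2 / 5 \<le> (norm (v + U + D))\<^sup>2"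
proof -
  have "- (inner U D) \<le> norm U * norm D"
    using norm_cauchy_schwarz [of "- U" D] by simp
  also have "\<dots> \<le> R * (R / 16)"
    using D norm_ge_zero [of U] unfolding U by (intro mult_left_mono) auto
  finally have "- (R\<^sup>2 / 16) \<le> inner U D"
    by (simp add: power2_eq_square)
  moreover have "(norm (v + U + D))\<^sup>2
      = (norm v)\<^sup>2 + (norm U)\<^sup>2 + (norm D)\<^sup>2 + 2 * inner v U + 2 * inner v D + 2 * inner U D"
    by (simp add: power2_norm_eq_inner inner_add_left inner_add_right inner_commute)
  moreover have "0 \<le> (norm D)\<^sup>2" "(norm U)\<^sup>2 = R\<^sup>2" "0 \<le> R\<^sup>2"
    using U by simp_all
  ultimately show ?thesis
    using vU vD by linarith
qed

section \<open>The good event\<close>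

(* The intersection of the three events of the statement, with m1 and mj the current estimates of
   the means mu1 and muj. *)
definition good_event ::
  "'a::euclidean_space \<Rightarrow> 'a \<Rightarrow> 'a \<Rightarrow> 'a \<Rightarrow> real \<Rightarrow> real \<Rightarrow> real \<Rightarrow> real \<Rightarrow> 'a set" where
  "good_event mu1 muj m1 mj sig1 sigj R \<beta> = {X.
      - R\<^sup>2 / 5 \<le> inner (X - muj) (muj - mu1)
      \<and> (- R\<^sup>2 / 64 \<le> inner (X - muj) (mu1 - m1)
         \<and> inner (X - muj) (muj - mj) \<le> (sigj / sig1)\<^sup>2 * R\<^sup>2 / 64)
      \<and> (real DIM('a) * (1 - 2 * sqrt (\<beta> / real DIM('a))) \<le> (norm (X - muj))\<^sup>2 / sigj\<^sup>2
         \<and> (norm (X - muj))\<^sup>2 / sigj\<^sup>2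
           \<le> real DIM('a) * (1 + 2 * sqrt (\<beta> / real DIM('a)) + 2 * \<beta> / real DIM('a)))}"

lemma good_event_true_means:
  assumes "X \<in> good_event mu1 muj m1 mj sig1 sigj R \<beta>"
  shows "X \<in> good_event mu1 muj mu1 muj sig1 sigj R \<beta>"
  using assms by (simp add: good_event_def)

lemma good_event_sq_norm_bounds:
  fixes muj X :: "'a::euclidean_space"
  defines "sd \<equiv> sqrt (real DIM('a))"
  assumes X: "X \<in> good_event mu1 muj m1 mj sig1 sigj R \<beta>" and sigj: "0 < sigj" and \<beta>: "0 \<le> \<beta>"
  shows "sigj\<^sup>2 * (sd\<^sup>2 - 2 * sqrt \<beta> * sd) \<le> (norm (X - muj))\<^sup>2"
    and "(norm (X - muj))\<^sup>2 \<le> sigj\<^sup>2 * (sd\<^sup>2 + 2 * sqrt \<beta> * sd + 2 * (sqrt \<beta>)\<^sup>2)"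
proof -
  have sd: "0 < sd" "sd\<^sup>2 = real DIM('a)"
    by (simp_all add: sd_def)
  have "real DIM('a) * (1 - 2 * sqrt (\<beta> / real DIM('a))) = sd\<^sup>2 - 2 * sqrt \<beta> * sd"
    "real DIM('a) * (1 + 2 * sqrt (\<beta> / real DIM('a)) + 2 * \<beta> / real DIM('a))
      = sd\<^sup>2 + 2 * sqrt \<beta> * sd + 2 * (sqrt \<beta>)\<^sup>2"
    using sd \<beta> unfolding sd(2) [symmetric] by (simp_all add: real_sqrt_divide field_simps power2_eq_square)
  then have "sd\<^sup>2 - 2 * sqrt \<beta> * sd \<le> (norm (X - muj))\<^sup>2 / sigj\<^sup>2"
    "(norm (X - muj))\<^sup>2 / sigj\<^sup>2 \<le> sd\<^sup>2 + 2 * sqrt \<beta> * sd + 2 * (sqrt \<beta>)\<^sup>2"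
    using X by (simp_all add: good_event_def)
  then show "sigj\<^sup>2 * (sd\<^sup>2 - 2 * sqrt \<beta> * sd) \<le> (norm (X - muj))\<^sup>2"
    "(norm (X - muj))\<^sup>2 \<le> sigj\<^sup>2 * (sd\<^sup>2 + 2 * sqrt \<beta> * sd + 2 * (sqrt \<beta>)\<^sup>2)"
    using sigj by (simp_all add: le_divide_eq divide_le_eq mult.commute)
qed

lemma log_density_ratio_ge:
  fixes mu1 muj m1 mj X :: "'a::euclidean_space"
  defines "d \<equiv> real DIM('a)"
  assumes sig: "0 < sig1" "0 < sigj" and M: "M = max sig1 sigj"
    and R: "R = norm (muj - mu1)" and \<beta>: "\<beta> = R\<^sup>2 / (64 * M\<^sup>2)" "16 \<le> \<beta>"
    and s1: "\<bar>s1\<^sup>2 - sig1\<^sup>2\<bar> \<le> 0.5 * sig1\<^sup>2 / sqrt d"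
    and sj: "\<bar>sj\<^sup>2 - sigj\<^sup>2\<bar> \<le> 0.5 * sigj\<^sup>2 / sqrt d"
    and D1: "norm (mu1 - m1) \<le> sig1 / 16 * (R / M)" and Dj: "norm (muj - mj) \<le> sigj / 16 * (R / M)"
    and X: "X \<in> good_event mu1 muj m1 mj sig1 sigj R \<beta>"
  shows "\<beta> \<le> ((norm (X - m1))\<^sup>2 / (2 * s1\<^sup>2) + d * ln (s1\<^sup>2) / 2)
    - ((norm (X - mj))\<^sup>2 / (2 * sj\<^sup>2) + d * ln (sj\<^sup>2) / 2)"
proof -
  define a where "a = (norm (X - muj))\<^sup>2"
  have sd: "1 \<le> sqrt d" "(sqrt d)\<^sup>2 = d"
    by (simp_all add: d_def DIM_positive Suc_le_eq)
  have sb: "4 \<le> sqrt \<beta>" "(sqrt \<beta>)\<^sup>2 = \<beta>"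
    using \<beta>(2) real_sqrt_le_mono [of 16 \<beta>] by simp_all
  have M_pos: "0 < M" and M_ge: "sig1 \<le> M" "sigj \<le> M"
    using sig by (auto simp: M)
  have S: "0 < sig1\<^sup>2" "0 < sigj\<^sup>2" "sig1\<^sup>2 \<le> M\<^sup>2" "sigj\<^sup>2 \<le> M\<^sup>2"
    using sig M_ge by (simp_all add: power_mono)
  have Y1: "a + 2 * R\<^sup>2 / 5 \<le> (norm (X - m1))\<^sup>2"
  proof -
    have "sig1 / 16 * (R / M) \<le> M / 16 * (R / M)"
      using M_ge sig M_pos by (intro mult_right_mono) (auto simp: R)
    also have "\<dots> = R / 16"
      using M_pos by simp
    finally have "norm (mu1 - m1) \<le> R / 16"
      using D1 by linarith
    then show ?thesis
      using sq_norm_add_add_ge [of "muj - mu1" R "mu1 - m1" "X - muj"] X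
      by (simp add: R a_def good_event_def algebra_simps)
  qed
  have Yj: "(norm (X - mj))\<^sup>2 \<le> a + sigj\<^sup>2 / sig1\<^sup>2 * R\<^sup>2 / 32 + sigj\<^sup>2 * R\<^sup>2 / (256 * M\<^sup>2)"
  proof -
    have "(norm (X - mj))\<^sup>2 = a + 2 * inner (X - muj) (muj - mj) + (norm (muj - mj))\<^sup>2"
      unfolding a_def power2_norm_eq_inner
      by (simp add: inner_diff_left inner_diff_right inner_commute algebra_simps)
    moreover have "(norm (muj - mj))\<^sup>2 \<le> sigj\<^sup>2 * R\<^sup>2 / (256 * M\<^sup>2)"
      using power_mono [OF Dj norm_ge_zero, of 2] by (simp add: power_mult_distrib power_divide)
    ultimately show ?thesis
      using X by (simp add: good_event_def power_divide)
  qed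
  have s_close: "\<bar>s1\<^sup>2 - sig1\<^sup>2\<bar> \<le> sig1\<^sup>2 / (2 * sqrt d)" "\<bar>sj\<^sup>2 - sigj\<^sup>2\<bar> \<le> sigj\<^sup>2 / (2 * sqrt d)"
    using s1 sj by simp_all
  have R_sq: "R\<^sup>2 = 64 * (sqrt \<beta>)\<^sup>2 * M\<^sup>2"
    using M_pos \<beta>(1) sb(2) by simp
  have a_bounds: "sigj\<^sup>2 * ((sqrt d)\<^sup>2 - 2 * sqrt \<beta> * sqrt d) \<le> a"
    "a \<le> sigj\<^sup>2 * ((sqrt d)\<^sup>2 + 2 * sqrt \<beta> * sqrt d + 2 * (sqrt \<beta>)\<^sup>2)"
    unfolding a_def d_def using good_event_sq_norm_bounds [OF X sig(2)] \<beta>(2) by simp_all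
  have "0 \<le> a"
    by (simp add: a_def)
  from log_ratio_terms_ge [OF sd(1) sb(1) S s_close R_sq this a_bounds Y1 Yj]
  show ?thesis
    unfolding sd(2) sb(2) .
qed

lemma measure_good_event_ge:
  fixes mu1 muj m1 mj :: "'a::euclidean_space"
  assumes sig: "0 < sig1" "0 < sigj" and M: "M = max sig1 sigj"
    and R: "R = norm (muj - mu1)" and \<beta>: "\<beta> = R\<^sup>2 / (64 * M\<^sup>2)" "0 < \<beta>"
    and D1: "norm (mu1 - m1) \<le> sig1 / 16 * (R / M)" and Dj: "norm (muj - mj) \<le> sigj / 16 * (R / M)"
  shows "1 - 5 * exp (- \<beta>) \<le> measure (gauss_iso muj sigj) (good_event mu1 muj m1 mj sig1 sigj R \<beta>)"
    (is "_ \<le> measure ?N ?E")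
proof -
  interpret N: prob_space ?N
    by (rule prob_space_gauss_iso [OF sig(2)])
  define d where "d = real DIM('a)"
  define q where "q = sqrt (\<beta> / d)"
  have d: "0 < d"
    by (simp add: d_def)
  have q: "0 < q" "d * q\<^sup>2 = \<beta>"
    using d \<beta>(2) by (simp_all add: q_def)
  have M_pos: "0 < M" and M_ge: "sig1 \<le> M" "sigj \<le> M"
    using sig by (auto simp: M)
  have R_M: "R / M = 8 * sqrt \<beta>"
    using M_pos by (simp add: \<beta>(1) R real_sqrt_divide real_sqrt_mult)
  then have R_sq: "R\<^sup>2 = 64 * \<beta> * M\<^sup>2" and R_pos: "0 < R"
    using M_pos \<beta>(2) by (simp_all add: field_simps)
  define B1 where "B1 = {x. R\<^sup>2 / 5 \<le> inner (x - muj) (mu1 - muj)}"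
  define B2 where "B2 = {x. R\<^sup>2 / 64 \<le> inner (x - muj) (m1 - mu1)}"
  define B3 where "B3 = {x. (sigj / sig1)\<^sup>2 * R\<^sup>2 / 64 \<le> inner (x - muj) (muj - mj)}"
  define B4 where "B4 = {x. (norm (x - muj))\<^sup>2 / sigj\<^sup>2 < real DIM('a) * (1 - 2 * q)}"
  define B5 where "B5 = {x. real DIM('a) * (1 + 2 * q + 2 * q\<^sup>2) < (norm (x - muj))\<^sup>2 / sigj\<^sup>2}"
  have "d * (1 + 2 * q + 2 * \<beta> / d) = d * (1 + 2 * q + 2 * q\<^sup>2)"
    using q d by (simp add: field_simps)
  then have cover: "space ?N - ?E \<subseteq> B1 \<union> B2 \<union> B3 \<union> B4 \<union> B5"
    by (auto simp: good_event_def B1_def B2_def B3_def B4_def B5_def q_def [symmetric]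
        d_def [symmetric] inner_diff_right not_le)
  have sets: "B1 \<in> N.events" "B2 \<in> N.events" "B3 \<in> N.events" "B4 \<in> N.events" "B5 \<in> N.events"
    "?E \<in> N.events"
    unfolding good_event_def B1_def B2_def B3_def B4_def B5_def by measurable
  have "N.prob B1 \<le> exp (- \<beta>)"
    unfolding B1_def
  proof (rule measure_gauss_iso_inner_ge [OF sig(2) R_pos])
    have "2 * \<beta> * sigj\<^sup>2 * R\<^sup>2 \<le> 2 * \<beta> * M\<^sup>2 * R\<^sup>2"
      using M_ge sig \<beta>(2) by (intro mult_right_mono mult_left_mono power_mono) auto
    also have "\<dots> \<le> (R\<^sup>2 / 5)\<^sup>2"
      using R_sq \<beta>(2) M_pos by (simp add: power2_eq_square field_simps)
    finally show "2 * \<beta> * sigj\<^sup>2 * R\<^sup>2 \<le> (R\<^sup>2 / 5)\<^sup>2" .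
  qed (use R_pos in \<open>auto simp: R norm_minus_commute\<close>)
  moreover have "N.prob B2 \<le> exp (- \<beta>)"
    unfolding B2_def
  proof (rule measure_gauss_iso_inner_ge [OF sig(2)])
    have "2 * \<beta> * sigj\<^sup>2 * (sig1 * sqrt \<beta> / 2)\<^sup>2 = \<beta>\<^sup>2 * (sigj\<^sup>2 * sig1\<^sup>2) / 2"
      using \<beta>(2) by (simp add: power_mult_distrib power_divide power2_eq_square)
    also have "\<dots> \<le> \<beta>\<^sup>2 * (M\<^sup>2 * M\<^sup>2) / 2"
      using M_ge sig by (intro divide_right_mono mult_left_mono mult_mono power_mono) auto
    also have "\<dots> \<le> (R\<^sup>2 / 64)\<^sup>2"
    proof -
      have "(R\<^sup>2 / 64)\<^sup>2 = \<beta>\<^sup>2 * (M\<^sup>2 * M\<^sup>2)"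
        unfolding R_sq by (simp add: power2_eq_square)
      moreover have "0 \<le> \<beta>\<^sup>2 * (M\<^sup>2 * M\<^sup>2)"
        by simp
      ultimately show ?thesis
        by linarith
    qed
    finally show "2 * \<beta> * sigj\<^sup>2 * (sig1 * sqrt \<beta> / 2)\<^sup>2 \<le> (R\<^sup>2 / 64)\<^sup>2" .
  qed (use D1 R_M sig \<beta>(2) R_pos in \<open>auto simp: norm_minus_commute\<close>)
  moreover have "N.prob B3 \<le> exp (- \<beta>)"
    unfolding B3_def
  proof (rule measure_gauss_iso_inner_ge [OF sig(2)])
    have "2 * \<beta> * sigj\<^sup>2 * (sigj * sqrt \<beta> / 2)\<^sup>2 = (sigj / sig1)\<^sup>2 ^ 2 * \<beta>\<^sup>2 * (sig1\<^sup>2 * sig1\<^sup>2) / 2"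
      using \<beta>(2) sig by (simp add: power_mult_distrib power_divide power2_eq_square)
    also have "\<dots> \<le> (sigj / sig1)\<^sup>2 ^ 2 * \<beta>\<^sup>2 * (M\<^sup>2 * M\<^sup>2) / 2"
      using M_ge sig by (intro divide_right_mono mult_left_mono mult_mono power_mono) auto
    also have "\<dots> \<le> ((sigj / sig1)\<^sup>2 * R\<^sup>2 / 64)\<^sup>2"
    proof -
      have "((sigj / sig1)\<^sup>2 * R\<^sup>2 / 64)\<^sup>2 = (sigj / sig1)\<^sup>2 ^ 2 * \<beta>\<^sup>2 * (M\<^sup>2 * M\<^sup>2)"
        unfolding R_sq by (simp add: power2_eq_square)
      moreover have "0 \<le> (sigj / sig1)\<^sup>2 ^ 2 * \<beta>\<^sup>2 * (M\<^sup>2 * M\<^sup>2)"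
        by simp
      ultimately show ?thesis
        by linarith
    qed
    finally show "2 * \<beta> * sigj\<^sup>2 * (sigj * sqrt \<beta> / 2)\<^sup>2 \<le> ((sigj / sig1)\<^sup>2 * R\<^sup>2 / 64)\<^sup>2" .
  qed (use Dj R_M sig \<beta>(2) R_pos in auto)
  moreover have "N.prob B4 \<le> exp (- \<beta>)"
    using measure_gauss_iso_norm_square_lt [OF sig(2) q(1), of muj] q(2) by (simp add: B4_def d_def)
  moreover have "N.prob B5 \<le> exp (- \<beta>)"
    using measure_gauss_iso_norm_square_gt [OF sig(2) q(1), of muj] q(2) by (simp add: B5_def d_def)
  moreover have "N.prob (space ?N - ?E) \<le> N.prob B1 + N.prob B2 + N.prob B3 + N.prob B4 + N.prob B5"
    using cover sets N.finite_measure_mono [OF cover] measure_Un_le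
    by (smt (verit) sets.Un)
  ultimately show ?thesis
    using N.prob_compl [OF sets(6)] by linarith
qed

section \<open>Consequences of separation\<close>

lemma Max_div_Min_ge_one:
  fixes f :: "'a \<Rightarrow> real"
  assumes "finite A" "i \<in> A" "\<forall>x\<in>A. 0 < f x"
  shows "1 \<le> Max (f ` A) / Min (f ` A)"
proof -
  have "Min (f ` A) \<in> f ` A"
    using assms by (intro Min_in) auto
  then have "0 < Min (f ` A)"
    using assms by auto
  moreover have "Min (f ` A) \<le> Max (f ` A)"
    using assms by (meson Max_ge Min_le finite_imageI imageI order_trans)
  ultimately show ?thesis
    by simp
qed

lemma separation_ratio_ge:
  fixes C M R L :: real
  assumes C: "64 \<le> C" and M: "0 < M" and L: "ln 2 \<le> L" and R: "C * M * sqrt L \<le> R"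
  shows "16 \<le> R\<^sup>2 / (64 * M\<^sup>2)"
proof -
  have "1 / 4 \<le> L"
    using L ln2_ge_two_thirds by simp
  then have "1 / 2 \<le> sqrt L"
    using real_sqrt_le_mono [of "1 / 4" L] by (simp add: real_sqrt_divide)
  then have "64 * M * (1 / 2) \<le> C * M * sqrt L"
    using C M by (intro mult_mono) auto
  then have "32 * M \<le> R"
    using R by linarith
  then have "(32 * M)\<^sup>2 \<le> R\<^sup>2"
    using M by (intro power_mono) auto
  then show ?thesis
    using M by (simp add: field_simps power2_eq_square)
qed

lemma mixture_separation_beta_ge:
  fixes k :: nat and sigs pis :: "nat \<Rightarrow> real" and mus :: "nat \<Rightarrow> 'a::real_normed_vector"
  assumes k: "2 \<le> k" and pis: "\<forall>i\<in>{1..k}. 0 < pis i" and sigs: "\<forall>i\<in>{1..k}. 0 < sigs i"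
    and C: "64 \<le> C" and il: "i \<in> {1..k}" "l \<in> {1..k}" "i \<noteq> l"
    and sep: "C * max (sigs i) (sigs l) * sqrt (ln (real k) + ln ((Max (sigs ` {1..k}) / Min (sigs ` {1..k}))
      * (Max (pis ` {1..k}) / Min (pis ` {1..k})))) \<le> norm (mus i - mus l)"
  shows "16 \<le> (norm (mus i - mus l))\<^sup>2 / (64 * (max (sigs i) (sigs l))\<^sup>2)"
proof (rule separation_ratio_ge [OF C _ _ sep])
  have "1 \<le> Max (sigs ` {1..k}) / Min (sigs ` {1..k})" "1 \<le> Max (pis ` {1..k}) / Min (pis ` {1..k})"
    using sigs pis il by (auto intro: Max_div_Min_ge_one)
  then have "1 * 1 \<le> Max (sigs ` {1..k}) / Min (sigs ` {1..k}) * (Max (pis ` {1..k}) / Min (pis ` {1..k}))"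
    by (intro mult_mono) auto
  moreover have "ln 2 \<le> ln (real k)"
    using k by simp
  ultimately show "ln 2 \<le> ln (real k) + ln (Max (sigs ` {1..k}) / Min (sigs ` {1..k})
      * (Max (pis ` {1..k}) / Min (pis ` {1..k})))"
    using ln_ge_zero [of "Max (sigs ` {1..k}) / Min (sigs ` {1..k}) * (Max (pis ` {1..k}) / Min (pis ` {1..k}))"]
    by linarith
  show "0 < max (sigs i) (sigs l)"
    using sigs il by (simp add: less_max_iff_disj)
qed

lemma le_mult_Min_imageD:
  fixes f :: "'a \<Rightarrow> real"
  assumes "finite S" "l \<in> S" "0 \<le> c" "x \<le> c * Min (f ` S)"
  shows "x \<le> c * f l"
proof -
  have "Min (f ` S) \<le> f l"
    using assms by (intro Min_le) auto
  then show ?thesis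
    using assms by (meson mult_left_mono order_trans)
qed

theorem lemma3p2:
  fixes k :: nat and C :: real
    and pis pie sigs sige :: "nat \<Rightarrow> real"
    and mus mue :: "nat \<Rightarrow> 'a::euclidean_space"
    and j :: nat
  assumes k2: "k \<ge> 2"
    and pis_pos: "\<forall>i\<in>{1..k}. pis i > 0"
    and pis_sum: "(\<Sum>i\<in>{1..k}. pis i) = 1"
    and sigs_pos: "\<forall>i\<in>{1..k}. sigs i > 0"
    and C64: "C \<ge> 64"
    and sep: "\<forall>i\<in>{1..k}. \<forall>l\<in>{1..k}. i \<noteq> l \<longrightarrow>
        norm (mus i - mus l) \<ge> C * max (sigs i) (sigs l) *
          sqrt (ln (real k) + ln ((Max (sigs ` {1..k}) / Min (sigs ` {1..k})) *
                                   (Max (pis ` {1..k}) / Min (pis ` {1..k}))))"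
    and mu_close: "\<forall>i\<in>{1..k}. norm (mue i - mus i) \<le>
        sigs i / 16 * Min ((\<lambda>l. norm (mus i - mus l) / max (sigs i) (sigs l)) ` ({1..k} - {i}))"
    and pi_close: "\<forall>i\<in>{1..k}. \<bar>pie i - pis i\<bar> \<le> pis i / 2"
    and sig_close: "\<forall>i\<in>{1..k}. \<bar>(sige i)\<^sup>2 - (sigs i)\<^sup>2\<bar> \<le> 0.5 * (sigs i)\<^sup>2 / sqrt (real DIM('a))"
    and j: "j \<in> {1..k}" "j \<noteq> 1"
  defines "\<beta> \<equiv> (norm (mus j - mus 1))\<^sup>2 / (64 * (max (sigs 1) (sigs j))\<^sup>2)"
    and "E \<equiv> {X. let v = X - mus j; d = real DIM('a); R = norm (mus j - mus 1);
                 \<beta> = (norm (mus j - mus 1))\<^sup>2 / (64 * (max (sigs 1) (sigs j))\<^sup>2) in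
              (- R\<^sup>2 / 5 \<le> inner v (mus j - mus 1))
            \<and> (- R\<^sup>2 / 64 \<le> inner v (mus 1 - mue 1)
               \<and> inner v (mus j - mue j) \<le> (sigs j / sigs 1)\<^sup>2 * R\<^sup>2 / 64)
            \<and> (d * (1 - 2 * sqrt (\<beta> / d)) \<le> (norm v)\<^sup>2 / (sigs j)\<^sup>2
               \<and> (norm v)\<^sup>2 / (sigs j)\<^sup>2 \<le> d * (1 + 2 * sqrt (\<beta> / d) + 2 * \<beta> / d))}"
  shows "(\<forall>X\<in>E. estep_weight k pie mue sige 1 X \<le> pie 1 / pie j * exp (- \<beta>)
               \<and> estep_weight k pis mus sigs 1 X \<le> pis 1 / pis j * exp (- \<beta>))
       \<and> measure (gauss_iso (mus j) (sigs j)) E \<ge> 1 - 5 * exp (- \<beta>)"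
proof -
  have k1: "1 \<in> {1..k}"
    using k2 by simp
  have sig: "0 < sigs 1" "0 < sigs j"
    using sigs_pos k1 j by auto
  define M where "M = max (sigs 1) (sigs j)"
  define R where "R = norm (mus j - mus 1)"
  have \<beta>_eq: "\<beta> = R\<^sup>2 / (64 * M\<^sup>2)"
    using assms(12) by (simp add: R_def M_def)
  have \<beta>16: "16 \<le> \<beta>"
    using mixture_separation_beta_ge [OF k2 pis_pos sigs_pos C64 j(1) k1 j(2) sep [rule_format, OF j(1) k1 j(2)]]
    unfolding \<beta>_eq R_def M_def by (simp add: max.commute)
  have D1: "norm (mus 1 - mue 1) \<le> sigs 1 / 16 * (R / M)"
    using le_mult_Min_imageD [OF _ _ _ mu_close [rule_format, OF k1], of j] j sig
    by (simp add: norm_minus_commute R_def M_def)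
  have Dj: "norm (mus j - mue j) \<le> sigs j / 16 * (R / M)"
    using le_mult_Min_imageD [OF _ _ _ mu_close [rule_format, OF j(1)], of 1] j k1 sig
    by (simp add: norm_minus_commute R_def M_def max.commute)
  have pie_pos: "\<forall>i\<in>{1..k}. 0 < pie i"
  proof
    fix i
    assume "i \<in> {1..k}"
    then have "\<bar>pie i - pis i\<bar> \<le> pis i / 2" "0 < pis i"
      using pi_close pis_pos by auto
    then show "0 < pie i"
      unfolding abs_le_iff by linarith
  qed
  have E_eq: "E = good_event (mus 1) (mus j) (mue 1) (mue j) (sigs 1) (sigs j) R \<beta>"
    using assms(12,13) by (simp add: good_event_def Let_def R_def)
  show ?thesis
  proof (intro conjI ballI)
    fix X
    assume "X \<in> E"
    then have X: "X \<in> good_event (mus 1) (mus j) (mue 1) (mue j) (sigs 1) (sigs j) R \<beta>"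
      by (simp add: E_eq)
    show "estep_weight k pie mue sige 1 X \<le> pie 1 / pie j * exp (- \<beta>)"
      using sig_close k1 j
      by (intro estep_weight_le_exp [OF k1 j(1) pie_pos]
          log_density_ratio_ge [OF sig M_def R_def \<beta>_eq \<beta>16 _ _ D1 Dj X]) auto
    have "0 \<le> sigs 1 / 16 * (R / M)" "0 \<le> sigs j / 16 * (R / M)"
      using sig by (simp_all add: R_def M_def)
    then show "estep_weight k pis mus sigs 1 X \<le> pis 1 / pis j * exp (- \<beta>)"
      by (intro estep_weight_le_exp [OF k1 j(1) pis_pos]
          log_density_ratio_ge [OF sig M_def R_def \<beta>_eq \<beta>16 _ _ _ _ good_event_true_means [OF X]]) auto
  next
    show "1 - 5 * exp (- \<beta>) \<le> measure (gauss_iso (mus j) (sigs j)) E"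
      unfolding E_eq using \<beta>16 by (intro measure_good_event_ge [OF sig M_def R_def \<beta>_eq _ D1 Dj]) auto
  qed
qed

end
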